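(* Let $T=([d],E)$ be a rooted tree, let $\{r_e\}_{e\in E}$ be positive integers, and let $p:\prod_{k=1}^d[n_k]\to\mathbb{R}$. Suppose that for every edge $w\to k$ of $T$ (i.e. $k=\mathcal{P}(w)$) there are $\Phi_{w\to k}:\prod_{i\in\mathcal{L}(w)\cup\{w\}}[n_i]\times[r_{(w,k)}]\to\mathbb{R}$ and $\Psi_{w\to k}:[r_{(w,k)}]\times\prod_{i\in\mathcal{R}(w)}[n_i]\to\mathbb{R}$ with $$p(x_1,\dots,x_d)=\sum_{\alpha_{(w,k)}=1}^{r_{(w,k)}}\Phi_{w\to k}(x_{\mathcal{L}(w)\cup w},\alpha_{(w,k)})\,\Psi_{w\to k}(\alpha_{(w,k)},x_{\mathcal{R}(w)}),$$ where the unfolding matrix $p(x_{\mathcal{L}(w)\cup w};x_{\mathcal{R}(w)})$ has rank exactly $r_{(w,k)}$ (so that the unfoldings $\Phi_{w\to k}(x_{\mathcal{L}(w)\cup w};\alpha_{(w,k)})$ and $\Psi_{w\to k}(\alpha_{(w,k)};x_{\mathcal{R}(w)})$ have full column rank, resp. full row rank, $r_{(w,k)}$). For a non-leaf $k$ define $$\Phi_{\mathcal{C}(k)\to k}(x_{\mathcal{L}(k)},\alpha_{(k,\mathcal{C}(k))})=\prod_{w\in\mathcal{C}(k)}\Phi_{w\to k}(x_{\mathcal{L}(w)\cup w},\alpha_{(k,w)}).$$ Consider, for $k=1,\dots,d$, the following linear equations (Core Determining Equations) in the unknown $G_k:[n_k]\times\prod_{w\in\mathcal{N}(k)}[r_{(w,k)}]\to\mathbb{R}$: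 - if $k$ is a leaf: $G_k(x_k,\alpha_{(k,\mathcal{P}(k))})=\Phi_{k\to\mathcal{P}(k)}(x_k,\alpha_{(k,\mathcal{P}(k))})$; - if $k$ is the root: $\sum_{\alpha_{(k,\mathcal{C}(k))}}\Phi_{\mathcal{C}(k)\to k}(x_{\mathcal{L}(k)},\alpha_{(k,\mathcal{C}(k))})\,G_k(x_k,\alpha_{(k,\mathcal{N}(k))})=p(x_1,\dots,x_d)$ for all $x$; - otherwise: $\sum_{\alpha_{(k,\mathcal{C}(k))}}\Phi_{\mathcal{C}(k)\to k}(x_{\mathcal{L}(k)},\alpha_{(k,\mathcal{C}(k))})\,G_k(x_k,\alpha_{(k,\mathcal{N}(k))})=\Phi_{k\to\mathcal{P}(k)}(x_{\mathcal{L}(k)\cup k},\alpha_{(k,\mathcal{P}(k))})$ for all $x_{\mathcal{L}(k)\cup k},\alpha_{(k,\mathcal{P}(k))}$. Then each of these equations has a unique solution $G_k$ (it is solvable exactly, and the solution is unique), and $p$ admits a TTNS ansatz over the cores $\{G_k\}_{k=1}^d$, i.e. $$p(x_1,\dots,x_d)=\sum_{\alpha_e\in[r_e],\,e\in E}\ \prod_{k=1}^d G_k\big(x_k,\alpha_{(k,\mathcal{N}(k))}\big).$$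
   Context: $T=([d],E)$ is a tree on vertex set $[d]=\{1,\dots,d\}$ with a distinguished root. For a node $k$: $\mathcal{C}(k)$ is its set of children, $\mathcal{P}(k)$ its parent (empty for the root), $\mathcal{N}(k)=\mathcal{C}(k)\cup\mathcal{P}(k)$ its neighbors, $\mathcal{L}(k)$ the set of proper descendants of $k$, and $\mathcal{R}(k)=[d]\setminus(\mathcal{L}(k)\cup\{k\})$ the set of non-descendants. Edges are undirected; $(w,k)$ and $(k,w)$ denote the same edge, and $w\to k$ indicates that $k$ is the parent of $w$. Each variable $x_i$ ranges over $[n_i]$. For $\mathcal{S}=\{i_1,\dots,i_m\}\subset[d]$, $x_{\mathcal{S}}=(x_{i_1},\dots,x_{i_m})$, and $x_{\mathcal{S}\cup k}:=x_{\mathcal{S}\cup\{k\}}$; each edge $e$ carries an index $\alpha_e\in[r_e]$, and $\alpha_{(k,\mathcal{S})}=(\alpha_{(k,i)})_{i\in\mathcal{S}}$ for a set $\mathcal{S}$ of neighbors of $k$. For a tensor $f$ and a partition $\mathcal{U}\cup\mathcal{V}$ of its index set, $f(x_{\mathcal{U}};x_{\mathcal{V}})$ denotes the unfolding matrix with rows indexed by $x_{\mathcal{U}}$ and columns by $x_{\mathcal{V}}$. *)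

theory Defs
  imports "HOL-Analysis.Analysis" "HOL-Library.FuncSet" "HOL-Library.Function_Algebras"
begin

text \<open>The edge (w, par w)
  is identified with (indexed by) its child endpoint w, so the edge set E is
  {1..d} - {rt}.\<close>

definition tree_rel :: "nat \<Rightarrow> nat \<Rightarrow> (nat \<Rightarrow> nat) \<Rightarrow> (nat \<times> nat) set" where
  "tree_rel d rt par = {(w, par w) | w. w \<in> {1..d} \<and> w \<noteq> rt}"

definition rooted_tree :: "nat \<Rightarrow> nat \<Rightarrow> (nat \<Rightarrow> nat) \<Rightarrow> bool" where
  "rooted_tree d rt par \<longleftrightarrow> rt \<in> {1..d} \<and>
     (\<forall>w \<in> {1..d} - {rt}. par w \<in> {1..d} \<and> (w, rt) \<in> (tree_rel d rt par)\<^sup>+)"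

definition children :: "nat \<Rightarrow> nat \<Rightarrow> (nat \<Rightarrow> nat) \<Rightarrow> nat \<Rightarrow> nat set" where
  "children d rt par k = {w \<in> {1..d}. w \<noteq> rt \<and> par w = k}"

definition desc :: "nat \<Rightarrow> nat \<Rightarrow> (nat \<Rightarrow> nat) \<Rightarrow> nat \<Rightarrow> nat set" where
  "desc d rt par k = {j \<in> {1..d}. (j, k) \<in> (tree_rel d rt par)\<^sup>+}"

definition nondesc :: "nat \<Rightarrow> nat \<Rightarrow> (nat \<Rightarrow> nat) \<Rightarrow> nat \<Rightarrow> nat set" where
  "nondesc d rt par k = {1..d} - (desc d rt par k \<union> {k})"

definition nbr_edges :: "nat \<Rightarrow> nat \<Rightarrow> (nat \<Rightarrow> nat) \<Rightarrow> nat \<Rightarrow> nat set" where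
  "nbr_edges d rt par k = children d rt par k \<union> (if k = rt then {} else {k})"

abbreviation idx :: "nat set \<Rightarrow> (nat \<Rightarrow> nat) \<Rightarrow> (nat \<Rightarrow> nat) set" where
  "idx S n \<equiv> PiE S (\<lambda>i. {1..n i})"

definition glue :: "nat set \<Rightarrow> (nat \<Rightarrow> nat) \<Rightarrow> (nat \<Rightarrow> nat) \<Rightarrow> (nat \<Rightarrow> nat)" where
  "glue U u v = (\<lambda>i. if i \<in> U then u i else v i)"

text \<open>Rank of the unfolding matrix f(x_U; x_V): the dimension of the (real) span of its
  columns, each column being the function x_U \<mapsto> f(x_U, x_V) on prod_{i in U}[n_i].\<close>
definition unfolding_rank ::
  "(nat \<Rightarrow> nat) \<Rightarrow> ((nat \<Rightarrow> nat) \<Rightarrow> real) \<Rightarrow> nat set \<Rightarrow> nat set \<Rightarrow> nat" where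
  "unfolding_rank n f U V =
     vector_space.dim (\<lambda>(c::real) (g :: (nat \<Rightarrow> nat) \<Rightarrow> real) u. c * g u)
       ((\<lambda>v. (\<lambda>u. if u \<in> idx U n then f (glue U u v) else 0)) ` idx V n)"


definition Phi_children ::
  "nat \<Rightarrow> nat \<Rightarrow> (nat \<Rightarrow> nat) \<Rightarrow> (nat \<Rightarrow> (nat \<Rightarrow> nat) \<Rightarrow> nat \<Rightarrow> real) \<Rightarrow> nat
    \<Rightarrow> (nat \<Rightarrow> nat) \<Rightarrow> (nat \<Rightarrow> nat) \<Rightarrow> real" where
  "Phi_children d rt par Phi k x \<beta> =
     (\<Prod>w \<in> children d rt par k. Phi w (restrict x (desc d rt par w \<union> {w})) (\<beta> w))"

text \<open>A leaf is a non-root vertex without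
  children; for the root (including the case d = 1) the right-hand side is p.\<close>
definition cde ::
  "nat \<Rightarrow> nat \<Rightarrow> (nat \<Rightarrow> nat) \<Rightarrow> (nat \<Rightarrow> nat) \<Rightarrow> (nat \<Rightarrow> nat) \<Rightarrow> ((nat \<Rightarrow> nat) \<Rightarrow> real)
    \<Rightarrow> (nat \<Rightarrow> (nat \<Rightarrow> nat) \<Rightarrow> nat \<Rightarrow> real) \<Rightarrow> nat \<Rightarrow> (nat \<Rightarrow> (nat \<Rightarrow> nat) \<Rightarrow> real) \<Rightarrow> bool" where
  "cde d rt par n r p Phi k G \<longleftrightarrow>
     (if k \<noteq> rt \<and> children d rt par k = {} then
        (\<forall>xk \<in> {1..n k}. \<forall>a \<in> {1..r k}.
           G xk (\<lambda>e\<in>{k}. a) = Phi k (\<lambda>i\<in>{k}. xk) a)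
      else if k = rt then
        (\<forall>x \<in> idx {1..d} n.
           (\<Sum>\<beta> \<in> PiE (children d rt par k) (\<lambda>e. {1..r e}).
              Phi_children d rt par Phi k x \<beta> * G (x k) \<beta>) = p x)
      else
        (\<forall>x \<in> idx (desc d rt par k \<union> {k}) n. \<forall>a \<in> {1..r k}.
           (\<Sum>\<beta> \<in> PiE (children d rt par k) (\<lambda>e. {1..r e}).
              Phi_children d rt par Phi k x \<beta> * G (x k) (\<beta>(k := a))) = Phi k x a))"

definition same_core ::
  "nat \<Rightarrow> nat \<Rightarrow> (nat \<Rightarrow> nat) \<Rightarrow> (nat \<Rightarrow> nat) \<Rightarrow> (nat \<Rightarrow> nat) \<Rightarrow> nat
    \<Rightarrow> (nat \<Rightarrow> (nat \<Rightarrow> nat) \<Rightarrow> real) \<Rightarrow> (nat \<Rightarrow> (nat \<Rightarrow> nat) \<Rightarrow> real) \<Rightarrow> bool" where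
  "same_core d rt par n r k G G' \<longleftrightarrow>
     (\<forall>xk \<in> {1..n k}. \<forall>\<alpha> \<in> PiE (nbr_edges d rt par k) (\<lambda>e. {1..r e}). G xk \<alpha> = G' xk \<alpha>)"

end

theory Submission
  imports Defs
begin

lemma sum_PiE_insert:
  assumes "k \<notin> A"
  shows "(\<Sum>g\<in>PiE (insert k A) R. f g) = (\<Sum>b\<in>R k. \<Sum>g\<in>PiE A R. f (g(k:=b)))"
proof -
  have "(\<Sum>g\<in>PiE (insert k A) R. f g) = (\<Sum>p\<in>R k \<times> PiE A R. f ((\<lambda>(y, g). g(k := y)) p))"
    unfolding PiE_insert_eq by (subst sum.reindex[OF inj_combinator[OF assms]]) (simp add: o_def)
  also have "\<dots> = (\<Sum>b\<in>R k. \<Sum>g\<in>PiE A R. f (g(k:=b)))"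
    by (simp add: sum.cartesian_product split_def)
  finally show ?thesis .
qed

lemma glue_PiE: "a \<in> PiE A R \<Longrightarrow> b \<in> PiE B R \<Longrightarrow> glue A a b \<in> PiE (A \<union> B) R"
  by (auto simp: glue_def PiE_iff extensional_def)

lemma sum_PiE_Un:
  assumes "A \<inter> B = {}"
  shows "(\<Sum>g\<in>PiE (A \<union> B) R. f g) = (\<Sum>a\<in>PiE A R. \<Sum>b\<in>PiE B R. f (glue A a b))"
proof -
  let ?h = "\<lambda>(a,b). glue A a b"
  have inj: "inj_on ?h (PiE A R \<times> PiE B R)"
  proof (rule inj_onI, clarsimp)
    fix a b a' b' assume H: "a \<in> PiE A R" "b \<in> PiE B R" "a' \<in> PiE A R" "b' \<in> PiE B R"
      "glue A a b = glue A a' b'"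
    have "a = a'"
    proof
      fix i have "glue A a b i = glue A a' b' i" by (rule fun_cong[OF H(5)])
      then show "a i = a' i" using H
        by (cases "i \<in> A") (auto simp: glue_def PiE_iff extensional_def)
    qed
    moreover have "b = b'"
    proof
      fix i have "glue A a b i = glue A a' b' i" by (rule fun_cong[OF H(5)])
      then show "b i = b' i" using H assms
        by (cases "i \<in> A") (auto simp: glue_def PiE_iff extensional_def disjoint_iff)
    qed
    ultimately show "a = a' \<and> b = b'" by simp
  qed
  have img: "?h ` (PiE A R \<times> PiE B R) = PiE (A \<union> B) R"
  proof
    show "?h ` (PiE A R \<times> PiE B R) \<subseteq> PiE (A \<union> B) R"
    proof (rule image_subsetI)
      fix p assume "p \<in> PiE A R \<times> PiE B R"
      then show "?h p \<in> PiE (A \<union> B) R" by (cases p) (simp add: glue_PiE)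
    qed
  next
    show "PiE (A \<union> B) R \<subseteq> ?h ` (PiE A R \<times> PiE B R)"
    proof
      fix g assume g: "g \<in> PiE (A \<union> B) R"
      have "g = ?h (restrict g A, restrict g B)"
      proof (rule ext)
        fix i show "g i = ?h (restrict g A, restrict g B) i"
          using g by (cases "i \<in> A"; cases "i \<in> B") (auto simp: glue_def PiE_iff extensional_def)
      qed
      moreover have "(restrict g A, restrict g B) \<in> PiE A R \<times> PiE B R" using g by auto
      ultimately show "g \<in> ?h ` (PiE A R \<times> PiE B R)" by (rule image_eqI)
    qed
  qed
  have "(\<Sum>g\<in>PiE (A \<union> B) R. f g) = (\<Sum>p\<in>PiE A R \<times> PiE B R. f (?h p))"
    using sum.reindex[OF inj, of f] img by (simp add: o_def)
  also have "\<dots> = (\<Sum>a\<in>PiE A R. \<Sum>b\<in>PiE B R. f (glue A a b))"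
    by (simp add: sum.cartesian_product split_def)
  finally show ?thesis .
qed

lemma prod_sum_blocks:
  fixes F :: "nat \<Rightarrow> (nat \<Rightarrow> nat) \<Rightarrow> real"
  assumes "finite W" "\<And>w w'. w \<in> W \<Longrightarrow> w' \<in> W \<Longrightarrow> w \<noteq> w' \<Longrightarrow> B w \<inter> B w' = {}"
  shows "(\<Prod>w\<in>W. \<Sum>g\<in>PiE (B w) R. F w g) = (\<Sum>g\<in>PiE (\<Union>w\<in>W. B w) R. \<Prod>w\<in>W. F w (restrict g (B w)))"
  using assms
proof (induction W rule: finite_induct)
  case empty then show ?case by simp
next
  case (insert w0 W)
  have disj: "B w0 \<inter> (\<Union>w\<in>W. B w) = {}" using insert by blast
  have "(\<Sum>g\<in>PiE (\<Union>w\<in>insert w0 W. B w) R. \<Prod>w\<in>insert w0 W. F w (restrict g (B w)))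
     = (\<Sum>a\<in>PiE (B w0) R. \<Sum>b\<in>PiE (\<Union>w\<in>W. B w) R.
          \<Prod>w\<in>insert w0 W. F w (restrict (glue (B w0) a b) (B w)))"
    by (simp only: UN_insert sum_PiE_Un[OF disj])
  also have "\<dots> = (\<Sum>a\<in>PiE (B w0) R. \<Sum>b\<in>PiE (\<Union>w\<in>W. B w) R.
          F w0 a * (\<Prod>w\<in>W. F w (restrict b (B w))))"
  proof (intro sum.cong refl)
    fix a b assume a: "a \<in> PiE (B w0) R" and b: "b \<in> PiE (\<Union>w\<in>W. B w) R"
    have 1: "restrict (glue (B w0) a b) (B w0) = a" using a
      by (auto simp: glue_def PiE_iff extensional_def fun_eq_iff)
    have 2: "restrict (glue (B w0) a b) (B w) = restrict b (B w)" if "w \<in> W" for w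
      using that insert.prems insert.hyps by (auto simp: glue_def fun_eq_iff)
    show "(\<Prod>w\<in>insert w0 W. F w (restrict (glue (B w0) a b) (B w))) = F w0 a * (\<Prod>w\<in>W. F w (restrict b (B w)))"
    proof -
      have "(\<Prod>w\<in>insert w0 W. F w (restrict (glue (B w0) a b) (B w)))
          = F w0 (restrict (glue (B w0) a b) (B w0)) * (\<Prod>w\<in>W. F w (restrict (glue (B w0) a b) (B w)))"
        using insert.hyps by (rule_tac prod.insert) auto
      also have "(\<Prod>w\<in>W. F w (restrict (glue (B w0) a b) (B w))) = (\<Prod>w\<in>W. F w (restrict b (B w)))"
        by (rule prod.cong[OF refl]) (simp only: 2)
      finally show ?thesis by (simp only: 1)
    qed
  qed
  also have "\<dots> = (\<Sum>a\<in>PiE (B w0) R. F w0 a) * (\<Sum>b\<in>PiE (\<Union>w\<in>W. B w) R. \<Prod>w\<in>W. F w (restrict b (B w)))"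
    by (rule sum_product[symmetric])
  also have "(\<Sum>b\<in>PiE (\<Union>w\<in>W. B w) R. \<Prod>w\<in>W. F w (restrict b (B w))) = (\<Prod>w\<in>W. \<Sum>g\<in>PiE (B w) R. F w g)"
    using insert.IH insert.prems by (metis insertCI)
  finally show ?case using insert.hyps by simp
qed

lemma prod_if_else_zero:
  fixes f :: "'a \<Rightarrow> real"
  shows "finite A \<Longrightarrow> (\<Prod>c\<in>A. if P c then f c else 0) = (if \<forall>c\<in>A. P c then \<Prod>c\<in>A. f c else 0)"
  by (induction A rule: finite_induct) auto

lemma glue_glue_same: "glue B u (glue B v x) = glue B u x"
  by (simp add: glue_def fun_eq_iff)

lemma glue_commute: "A \<inter> B = {} \<Longrightarrow> glue A u (glue B v x) = glue B v (glue A u x)"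
  by (auto simp: glue_def fun_eq_iff)

lemma restrict_glue_self: "u \<in> PiE A R \<Longrightarrow> restrict (glue A u x) A = u"
  by (auto simp: glue_def PiE_iff extensional_def fun_eq_iff)

lemma restrict_glue_disjoint: "A \<inter> B = {} \<Longrightarrow> restrict (glue A u x) B = restrict x B"
  by (auto simp: glue_def fun_eq_iff)

lemma restrict_glue_subset: "B \<subseteq> A \<Longrightarrow> restrict (glue A u x) B = restrict u B"
  by (auto simp: glue_def fun_eq_iff)

lemma glue_in_PiE_subset: "u \<in> PiE A R \<Longrightarrow> x \<in> PiE I R \<Longrightarrow> A \<subseteq> I \<Longrightarrow> glue A u x \<in> PiE I R"
  using glue_PiE[of u A R x I] by (simp add: Un_absorb1)


lemma (in module) span_image_sum_repr:
  assumes "finite E" "x \<in> span (f ` E)"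
  shows "\<exists>c. x = (\<Sum>v\<in>E. scale (c v) (f v))"
  using assms(2)
proof (induction rule: span_induct_alt)
  case base
  show ?case by (intro exI[of _ "\<lambda>_. 0"]) simp
next
  case (step c x y)
  then obtain v0 cc where v0: "v0 \<in> E" "x = f v0" and y: "y = (\<Sum>v\<in>E. scale (cc v) (f v))"
    by blast
  have "scale (if v = v0 then c else 0) (f v) = (if v = v0 then scale c x else 0)" for v
    using v0 by simp
  then have "scale c x + y = (\<Sum>v\<in>E. scale (cc v + (if v = v0 then c else 0)) (f v))"
    using v0 assms(1) by (simp add: y scale_left_distrib sum.distrib)
  then show ?case by (rule exI[where x="\<lambda>v. cc v + (if v = v0 then c else 0)"])
qed

lemma (in vector_space) card_le_dim_imp_independent_spanned:
  assumes fin: "finite S" and V: "V \<subseteq> span S" and card: "card S \<le> dim V"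
  shows "independent S" and "S \<subseteq> span V"
proof -
  obtain A where A: "A \<subseteq> S" "independent A" "S \<subseteq> span A"
    using maximal_independent_subset by blast
  have "V \<subseteq> span A"
    using V A(3) span_mono[OF A(3)] by (simp add: span_span)
  then have "card S \<le> card A"
    using card dim_le_card[of V A] finite_subset[OF A(1) fin] by simp
  then have "A = S"
    using A(1) fin card_mono[OF fin A(1)] by (intro card_subset_eq) auto
  with A(2) show "independent S" by simp
  obtain B where B: "B \<subseteq> V" "independent B" "V \<subseteq> span B" "card B = dim V"
    using basis_exists by blast
  have "S \<subseteq> span B"
  proof
    fix s assume s: "s \<in> S"
    show "s \<in> span B"
    proof (rule ccontr)
      assume ns: "s \<notin> span B"
      have sub: "insert s B \<subseteq> span S"
        using s B(1) V span_base by blast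
      have nB: "s \<notin> B" using ns span_base by blast
      then have "independent (insert s B)"
        using independent_insert B(2) ns by simp
      then have "finite (insert s B) \<and> card (insert s B) \<le> card S"
        by (rule independent_span_bound[OF fin _ sub])
      with nB
      show False using card B(4) by auto
    qed
  qed
  then show "S \<subseteq> span V"
    using B(1) span_mono by blast
qed

interpretation real_fun: vector_space "\<lambda>(c::real) (g::(nat \<Rightarrow> nat) \<Rightarrow> real) u. c * g u"
  by unfold_locales (auto simp: fun_eq_iff algebra_simps)

lemma vector_space_real_mult: "vector_space ((*) :: real \<Rightarrow> real \<Rightarrow> real)"
  by unfold_locales (simp_all add: algebra_simps)

lemma real_fun_dual:
  "vector_space_pair (\<lambda>(c::real) (g::(nat \<Rightarrow> nat) \<Rightarrow> real) u. c * g u) ((*) :: real \<Rightarrow> real \<Rightarrow> real)"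
  using real_fun.vector_space_axioms vector_space_real_mult by (rule vector_space_pair.intro)

lemma sum_fun_apply: "(\<Sum>a\<in>A. f a) u = (\<Sum>a\<in>A. f a u)"
  by (induction A rule: infinite_finite_induct) auto

definition left_inverse_on :: "'u set \<Rightarrow> ('u \<Rightarrow> nat \<Rightarrow> real) \<Rightarrow> nat \<Rightarrow> (nat \<Rightarrow> 'u \<Rightarrow> real) \<Rightarrow> bool" where
  "left_inverse_on D \<Phi> r l \<longleftrightarrow>
     (\<forall>a\<in>{1..r}. \<forall>b\<in>{1..r}. (\<Sum>u\<in>D. l a u * \<Phi> u b) = (if a = b then 1 else 0))"

lemma independent_columns_left_inverse:
  fixes D :: "(nat \<Rightarrow> nat) set" and \<Phi> :: "(nat \<Rightarrow> nat) \<Rightarrow> nat \<Rightarrow> real"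
  defines "col a \<equiv> \<lambda>u. if u \<in> D then \<Phi> u a else 0"
  assumes D: "finite D" and ind: "real_fun.independent (col ` {1..r})" and inj: "inj_on col {1..r}"
  shows "\<exists>l. left_inverse_on D \<Phi> r l"
proof -
  have "\<forall>a\<in>{1..r}. \<exists>g. Vector_Spaces.linear (\<lambda>c g u. c * g u) (*) g \<and>
      (\<forall>b\<in>{1..r}. g (col b) = (if a = b then 1 else 0))"
  proof
    fix a assume a: "a \<in> {1..r}"
    obtain g where g: "Vector_Spaces.linear (\<lambda>c g u. c * g u) (*) g"
      "\<forall>h\<in>col ` {1..r}. g h = (if h = col a then 1 else 0)"
      using vector_space_pair.linear_independent_extend[OF real_fun_dual ind, of "\<lambda>h. if h = col a then 1 else 0"]
      by blast
    have "\<forall>b\<in>{1..r}. g (col b) = (if a = b then 1 else 0)"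
      using g(2) a inj by (auto simp: inj_on_eq_iff)
    with g(1) show "\<exists>g. Vector_Spaces.linear (\<lambda>c g u. c * g u) (*) g \<and>
      (\<forall>b\<in>{1..r}. g (col b) = (if a = b then 1 else 0))" by (intro exI[of _ g] conjI)
  qed
  then obtain g where g: "\<forall>a\<in>{1..r}. Vector_Spaces.linear (\<lambda>c g u. c * g u) (*) (g a) \<and>
      (\<forall>b\<in>{1..r}. g a (col b) = (if a = b then 1 else 0))"
    by (rule bchoice[THEN exE])
  define l where "l a u = g a (\<lambda>u'. if u' = u then 1 else 0)" for a u
  have "left_inverse_on D \<Phi> r l"
    unfolding left_inverse_on_def
  proof (intro ballI)
    fix a b assume a: "a \<in> {1..r}" and b: "b \<in> {1..r}"
    have lin: "Vector_Spaces.linear (\<lambda>c g u. c * g u) (*) (g a)"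
      using g a by blast
    have "col b = (\<Sum>u\<in>D. (\<lambda>u'. \<Phi> u b * (if u' = u then 1 else 0)))"
    proof
      fix u'
      have "\<Phi> u b * (if u' = u then 1 else 0) = (if u' = u then \<Phi> u b else 0)" for u
        by simp
      then show "col b u' = (\<Sum>u\<in>D. (\<lambda>u'. \<Phi> u b * (if u' = u then 1 else 0))) u'"
        using D by (simp add: sum_fun_apply col_def sum.delta')
    qed
    then have "g a (col b) = (\<Sum>u\<in>D. g a (\<lambda>u'. \<Phi> u b * (if u' = u then 1 else 0)))"
      by (simp only: vector_space_pair.linear_sum[OF real_fun_dual lin])
    also have "\<dots> = (\<Sum>u\<in>D. \<Phi> u b * l a u)"
      unfolding l_def by (rule sum.cong[OF refl]) (rule vector_space_pair.linear_scale[OF real_fun_dual lin])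
    finally show "(\<Sum>u\<in>D. l a u * \<Phi> u b) = (if a = b then 1 else 0)"
      using g a b by (simp add: mult.commute)
  qed
  then show ?thesis by (rule exI[of _ l])
qed

lemma unfolding_factorisation_rank:
  fixes F :: "(nat \<Rightarrow> nat) \<Rightarrow> (nat \<Rightarrow> nat) \<Rightarrow> real"
    and \<Phi> :: "(nat \<Rightarrow> nat) \<Rightarrow> nat \<Rightarrow> real" and \<Psi> :: "nat \<Rightarrow> (nat \<Rightarrow> nat) \<Rightarrow> real"
  assumes D: "finite D" and E: "finite E"
    and factor: "\<And>u v. u \<in> D \<Longrightarrow> v \<in> E \<Longrightarrow> F u v = (\<Sum>a=1..r. \<Phi> u a * \<Psi> a v)"
    and rank: "real_fun.dim ((\<lambda>v u. if u \<in> D then F u v else 0) ` E) = r"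
  shows "\<exists>l. left_inverse_on D \<Phi> r l"
    and "\<forall>a\<in>{1..r}. \<exists>c. \<forall>u\<in>D. \<Phi> u a = (\<Sum>v\<in>E. c v * F u v)"
proof -
  define col where "col a = (\<lambda>u. if u \<in> D then \<Phi> u a else 0)" for a
  define F_col where "F_col v = (\<lambda>u. if u \<in> D then F u v else 0)" for v
  have "F_col v \<in> real_fun.span (col ` {1..r})" if "v \<in> E" for v
  proof -
    have eq: "F_col v = (\<Sum>a=1..r. (\<lambda>u. \<Psi> a v * col a u))"
    proof
      fix u show "F_col v u = (\<Sum>a=1..r. (\<lambda>u. \<Psi> a v * col a u)) u"
        using that by (cases "u \<in> D") (simp_all add: sum_fun_apply F_col_def col_def factor mult.commute)
    qed
    have "(\<lambda>u. \<Psi> a v * col a u) \<in> real_fun.span (col ` {1..r})" if "a \<in> {1..r}" for a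
      using that by (intro real_fun.span_scale[of "col a"] real_fun.span_base) auto
    then show ?thesis
      unfolding eq by (rule real_fun.span_sum)
  qed
  then have span: "F_col ` E \<subseteq> real_fun.span (col ` {1..r})"
    by blast
  have card_le: "card (col ` {1..r}) \<le> r"
    using card_image_le[of "{1..r}" col] by simp
  then have card_le_dim: "card (col ` {1..r}) \<le> real_fun.dim (F_col ` E)"
    using rank by (simp add: F_col_def)
  note indep_spanned = real_fun.card_le_dim_imp_independent_spanned[OF finite_imageI[OF finite_atLeastAtMost] span card_le_dim]
  have "r \<le> card (col ` {1..r})"
    using real_fun.dim_le_card[OF span] rank by (simp add: F_col_def)
  then have "inj_on col {1..r}"
    using card_le by (intro eq_card_imp_inj_on) auto
  from independent_columns_left_inverse[OF D indep_spanned(1)[unfolded col_def] this[unfolded col_def]]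
  show "\<exists>l. left_inverse_on D \<Phi> r l" .
  show "\<forall>a\<in>{1..r}. \<exists>c. \<forall>u\<in>D. \<Phi> u a = (\<Sum>v\<in>E. c v * F u v)"
  proof
    fix a assume "a \<in> {1..r}"
    then have "col a \<in> real_fun.span (F_col ` E)"
      using indep_spanned(2) by (blast intro: imageI)
    from real_fun.span_image_sum_repr[OF E this]
    obtain c where c: "col a = (\<Sum>v\<in>E. (\<lambda>u. c v * F_col v u))" ..
    have "\<Phi> u a = (\<Sum>v\<in>E. c v * F u v)" if "u \<in> D" for u
      using fun_cong[OF c, of u] that by (simp add: sum_fun_apply col_def F_col_def)
    then show "\<exists>c. \<forall>u\<in>D. \<Phi> u a = (\<Sum>v\<in>E. c v * F u v)" by (intro exI[of _ c] ballI)
  qed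
qed

definition contract_block ::
  "(nat \<Rightarrow> nat) \<Rightarrow> nat set \<Rightarrow> ((nat \<Rightarrow> nat) \<Rightarrow> real) \<Rightarrow> ((nat \<Rightarrow> nat) \<Rightarrow> real) \<Rightarrow> (nat \<Rightarrow> nat) \<Rightarrow> real"
  where "contract_block n B c f x = (\<Sum>u\<in>idx B n. c u * f (glue B u x))"

definition block_separable ::
  "(nat \<Rightarrow> nat) \<Rightarrow> nat set \<Rightarrow> nat set \<Rightarrow> ((nat \<Rightarrow> nat) \<Rightarrow> nat \<Rightarrow> real) \<Rightarrow> nat
    \<Rightarrow> ((nat \<Rightarrow> nat) \<Rightarrow> real) \<Rightarrow> bool" where
  "block_separable n I B \<Phi> r f \<longleftrightarrow> (\<exists>g.
     (\<forall>x\<in>idx I n. f x = (\<Sum>a=1..r. \<Phi> (restrict x B) a * g a x)) \<and>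
     (\<forall>a u x. g a (glue B u x) = g a x))"

lemma contract_block_glue_same: "contract_block n B c f (glue B u x) = contract_block n B c f x"
  by (simp add: contract_block_def glue_glue_same)

lemma contract_block_glue_disjoint:
  assumes "A \<inter> B = {}" and "\<And>u x. f (glue A u x) = f x"
  shows "contract_block n B c f (glue A u x) = contract_block n B c f x"
proof -
  have "B \<inter> A = {}" using assms(1) by blast
  then show ?thesis
    using assms(2) by (simp add: contract_block_def glue_commute[of B A])
qed

lemma block_separable_contract:
  assumes sep: "block_separable n I B \<Phi> r f" and disj: "B \<inter> B' = {}" and B': "B' \<subseteq> I"
  shows "block_separable n I B \<Phi> r (contract_block n B' c f)"
proof -
  obtain g where g: "\<forall>x\<in>idx I n. f x = (\<Sum>a=1..r. \<Phi> (restrict x B) a * g a x)"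
    and g_inv: "\<And>a u x. g a (glue B u x) = g a x"
    using sep unfolding block_separable_def by blast
  have "contract_block n B' c f x = (\<Sum>a=1..r. \<Phi> (restrict x B) a * contract_block n B' c (g a) x)"
    if x: "x \<in> idx I n" for x
  proof -
    have "contract_block n B' c f x
        = (\<Sum>u\<in>idx B' n. c u * (\<Sum>a=1..r. \<Phi> (restrict x B) a * g a (glue B' u x)))"
      unfolding contract_block_def
    proof (intro sum.cong refl arg_cong[where f="\<lambda>t. c _ * t"])
      fix u assume "u \<in> idx B' n"
      then have "glue B' u x \<in> idx I n" using x B' by (rule glue_in_PiE_subset)
      then show "f (glue B' u x) = (\<Sum>a=1..r. \<Phi> (restrict x B) a * g a (glue B' u x))"
        using g disj restrict_glue_disjoint[of B' B] by (simp add: Int_commute)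
    qed
    also have "\<dots> = (\<Sum>a=1..r. \<Phi> (restrict x B) a * contract_block n B' c (g a) x)"
      unfolding contract_block_def sum_distrib_left by (subst sum.swap) (simp add: mult_ac)
    finally show ?thesis .
  qed
  moreover have "contract_block n B' c (g a) (glue B u x) = contract_block n B' c (g a) x" for a u x
    using disj g_inv by (rule contract_block_glue_disjoint)
  ultimately show ?thesis
    unfolding block_separable_def by (intro exI[of _ "\<lambda>a. contract_block n B' c (g a)"] conjI ballI allI)
qed

lemma block_separable_reconstruct:
  assumes sep: "block_separable n I B \<Phi> r f" and B: "B \<subseteq> I"
    and l: "left_inverse_on (idx B n) \<Phi> r l" and x: "x \<in> idx I n"
  shows "f x = (\<Sum>a=1..r. \<Phi> (restrict x B) a * contract_block n B (l a) f x)"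
proof -
  obtain g where g: "\<forall>x\<in>idx I n. f x = (\<Sum>a=1..r. \<Phi> (restrict x B) a * g a x)"
    and g_inv: "\<And>a u x. g a (glue B u x) = g a x"
    using sep unfolding block_separable_def by blast
  have "contract_block n B (l a) f x = g a x" if a: "a \<in> {1..r}" for a
  proof -
    have "contract_block n B (l a) f x = (\<Sum>u\<in>idx B n. l a u * (\<Sum>b=1..r. \<Phi> u b * g b x))"
      unfolding contract_block_def
    proof (intro sum.cong refl arg_cong[where f="\<lambda>t. l a _ * t"])
      fix u assume u: "u \<in> idx B n"
      then have "glue B u x \<in> idx I n" using x B by (rule glue_in_PiE_subset)
      then show "f (glue B u x) = (\<Sum>b=1..r. \<Phi> u b * g b x)"
        using g g_inv restrict_glue_self[OF u] by simp
    qed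
    also have "\<dots> = (\<Sum>b=1..r. (\<Sum>u\<in>idx B n. l a u * \<Phi> u b) * g b x)"
      unfolding sum_distrib_left sum_distrib_right by (subst sum.swap) (simp add: mult_ac)
    also have "\<dots> = (\<Sum>b=1..r. if a = b then g b x else 0)"
      using l a by (intro sum.cong refl) (simp add: left_inverse_on_def)
    also have "\<dots> = g a x"
      using a by simp
    finally show ?thesis .
  qed
  then show ?thesis
    using g x by simp
qed

fun contract_blocks ::
  "(nat \<Rightarrow> nat) \<Rightarrow> (nat \<Rightarrow> nat set) \<Rightarrow> (nat \<Rightarrow> nat \<Rightarrow> (nat \<Rightarrow> nat) \<Rightarrow> real) \<Rightarrow> nat list
    \<Rightarrow> (nat \<Rightarrow> nat) \<Rightarrow> ((nat \<Rightarrow> nat) \<Rightarrow> real) \<Rightarrow> (nat \<Rightarrow> nat) \<Rightarrow> real" where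
  "contract_blocks n B L [] \<beta> f = f"
| "contract_blocks n B L (w # ws) \<beta> f = contract_blocks n B L ws \<beta> (contract_block n (B w) (L w (\<beta> w)) f)"

lemma contract_blocks_cong:
  "(\<And>w. w \<in> set ws \<Longrightarrow> \<beta> w = \<beta>' w) \<Longrightarrow> contract_blocks n B L ws \<beta> f = contract_blocks n B L ws \<beta>' f"
  by (induction ws arbitrary: f) simp_all

lemma contract_blocks_glue_invariant:
  assumes "\<forall>v\<in>set ws. v = w \<or> B v \<inter> B w = {}"
    and "w \<in> set ws \<or> (\<forall>u x. f (glue (B w) u x) = f x)"
  shows "contract_blocks n B L ws \<beta> f (glue (B w) u x) = contract_blocks n B L ws \<beta> f x"
  using assms
proof (induction ws arbitrary: f)
  case (Cons v ws)
  let ?f = "contract_block n (B v) (L v (\<beta> v)) f"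
  have "w \<in> set ws \<or> (\<forall>u x. ?f (glue (B w) u x) = ?f x)"
  proof (cases "v = w")
    case True
    then show ?thesis using contract_block_glue_same by blast
  next
    case False
    then have "B w \<inter> B v = {}" "w \<in> set ws \<or> (\<forall>u x. f (glue (B w) u x) = f x)"
      using Cons.prems by auto
    then show ?thesis using contract_block_glue_disjoint by blast
  qed
  with Cons show ?case by simp
qed simp

lemma contract_blocks_expansion:
  assumes "distinct ws" and B: "\<forall>w\<in>set ws. B w \<subseteq> I"
    and disj: "\<forall>v\<in>set ws. \<forall>w\<in>set ws. v \<noteq> w \<longrightarrow> B v \<inter> B w = {}"
    and L: "\<forall>w\<in>set ws. left_inverse_on (idx (B w) n) (\<Phi> w) (r w) (L w)"
    and sep: "\<forall>w\<in>set ws. block_separable n I (B w) (\<Phi> w) (r w) f"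
    and x: "x \<in> idx I n"
  shows "f x = (\<Sum>\<beta>\<in>PiE (set ws) (\<lambda>w. {1..r w}).
                 (\<Prod>w\<in>set ws. \<Phi> w (restrict x (B w)) (\<beta> w)) * contract_blocks n B L ws \<beta> f x)"
  using assms
proof (induction ws arbitrary: f)
  case (Cons w ws)
  let ?R = "\<lambda>w. {1..r w}" and ?P = "\<lambda>\<beta>. \<Prod>v\<in>set ws. \<Phi> v (restrict x (B v)) (\<beta> v)"
  define f' where "f' a = contract_block n (B w) (L w a) f" for a
  have w: "w \<notin> set ws" using Cons.prems(1) by simp
  have "block_separable n I (B v) (\<Phi> v) (r v) (f' a)" if "v \<in> set ws" for v a
    unfolding f'_def using Cons.prems(2-5) that w
    by (intro block_separable_contract) auto
  then have IH: "f' a x = (\<Sum>\<beta>\<in>PiE (set ws) ?R. ?P \<beta> * contract_blocks n B L ws \<beta> (f' a) x)" for a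
    using Cons.prems by (intro Cons.IH) auto
  have upd: "(\<Prod>v\<in>insert w (set ws). \<Phi> v (restrict x (B v)) ((\<beta>(w := a)) v))
      = \<Phi> w (restrict x (B w)) a * ?P \<beta>" for \<beta> a
  proof -
    have "?P (\<beta>(w := a)) = ?P \<beta>"
      using w by (intro prod.cong) auto
    then show ?thesis
      using w by (simp add: prod.insert)
  qed
  have contract_upd: "contract_blocks n B L (w # ws) (\<beta>(w := a)) f = contract_blocks n B L ws \<beta> (f' a)"
    for \<beta> a
    unfolding f'_def by simp (rule contract_blocks_cong; use w in auto)
  have "f x = (\<Sum>a\<in>?R w. \<Phi> w (restrict x (B w)) a * f' a x)"
    unfolding f'_def using Cons.prems by (intro block_separable_reconstruct) auto
  also have "\<dots> = (\<Sum>a\<in>?R w. \<Sum>\<beta>\<in>PiE (set ws) ?R.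
      \<Phi> w (restrict x (B w)) a * ?P \<beta> * contract_blocks n B L ws \<beta> (f' a) x)"
    by (simp add: IH sum_distrib_left mult.assoc)
  also have "\<dots> = (\<Sum>a\<in>?R w. \<Sum>\<beta>\<in>PiE (set ws) ?R.
      (\<Prod>v\<in>insert w (set ws). \<Phi> v (restrict x (B v)) ((\<beta>(w := a)) v))
        * contract_blocks n B L (w # ws) (\<beta>(w := a)) f x)"
    by (simp only: upd contract_upd)
  also have "\<dots> = (\<Sum>\<beta>\<in>PiE (insert w (set ws)) ?R.
      (\<Prod>v\<in>insert w (set ws). \<Phi> v (restrict x (B v)) (\<beta> v)) * contract_blocks n B L (w # ws) \<beta> f x)"
    by (rule sum_PiE_insert[OF w, symmetric])
  finally show ?case by (simp only: list.set)
qed simp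


lemma tensor_coefficients_zero:
  fixes C :: "(nat \<Rightarrow> nat) \<Rightarrow> real"
  assumes W: "finite W"
    and disj: "\<And>v w. v \<in> W \<Longrightarrow> w \<in> W \<Longrightarrow> v \<noteq> w \<Longrightarrow> B v \<inter> B w = {}"
    and L: "\<forall>w\<in>W. left_inverse_on (idx (B w) n) (\<Phi> w) (r w) (L w)"
    and zero: "\<forall>y\<in>idx (\<Union>w\<in>W. B w) n.
      (\<Sum>\<beta>\<in>PiE W (\<lambda>w. {1..r w}). C \<beta> * (\<Prod>w\<in>W. \<Phi> w (restrict y (B w)) (\<beta> w))) = 0"
    and \<alpha>: "\<alpha> \<in> PiE W (\<lambda>w. {1..r w})"
  shows "C \<alpha> = 0"
proof -
  let ?R = "\<lambda>w. {1..r w}" and ?Y = "idx (\<Union>w\<in>W. B w) n"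
  let ?F = "\<lambda>\<beta> w u. L w (\<alpha> w) u * \<Phi> w u (\<beta> w)"
  have delta: "(\<Prod>w\<in>W. \<Sum>u\<in>idx (B w) n. ?F \<beta> w u) = (if \<beta> = \<alpha> then 1 else 0)"
    if \<beta>: "\<beta> \<in> PiE W ?R" for \<beta>
  proof -
    have "(\<Prod>w\<in>W. \<Sum>u\<in>idx (B w) n. ?F \<beta> w u) = (\<Prod>w\<in>W. if \<alpha> w = \<beta> w then 1 else 0)"
    proof (rule prod.cong[OF refl])
      fix w assume "w \<in> W"
      then have "\<alpha> w \<in> ?R w" "\<beta> w \<in> ?R w" "left_inverse_on (idx (B w) n) (\<Phi> w) (r w) (L w)"
        using \<alpha> \<beta> L by auto
      then show "(\<Sum>u\<in>idx (B w) n. ?F \<beta> w u) = (if \<alpha> w = \<beta> w then 1 else 0)"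
        by (simp add: left_inverse_on_def)
    qed
    also have "\<dots> = (if \<beta> = \<alpha> then 1 else 0)"
    proof (cases "\<beta> = \<alpha>")
      case False
      then obtain w where "w \<in> W" "\<alpha> w \<noteq> \<beta> w"
        using \<alpha> \<beta> by (metis PiE_ext)
      then show ?thesis using W False by (auto intro: prod_zero)
    qed simp
    finally show ?thesis .
  qed
  have "0 = (\<Sum>y\<in>?Y. (\<Prod>w\<in>W. L w (\<alpha> w) (restrict y (B w)))
              * (\<Sum>\<beta>\<in>PiE W ?R. C \<beta> * (\<Prod>w\<in>W. \<Phi> w (restrict y (B w)) (\<beta> w))))"
    using zero by simp
  also have "\<dots> = (\<Sum>y\<in>?Y. \<Sum>\<beta>\<in>PiE W ?R. C \<beta> * (\<Prod>w\<in>W. ?F \<beta> w (restrict y (B w))))"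
    by (simp add: sum_distrib_left prod.distrib mult_ac)
  also have "\<dots> = (\<Sum>\<beta>\<in>PiE W ?R. C \<beta> * (\<Sum>y\<in>?Y. \<Prod>w\<in>W. ?F \<beta> w (restrict y (B w))))"
    by (subst sum.swap) (simp add: sum_distrib_left)
  also have "\<dots> = (\<Sum>\<beta>\<in>PiE W ?R. C \<beta> * (\<Prod>w\<in>W. \<Sum>u\<in>idx (B w) n. ?F \<beta> w u))"
    using prod_sum_blocks[OF W disj] by simp
  also have "\<dots> = (\<Sum>\<beta>\<in>PiE W ?R. C \<beta> * (if \<beta> = \<alpha> then 1 else 0))"
    using delta by (intro sum.cong refl) simp
  also have "\<dots> = C \<alpha>"
    using \<alpha> W by (simp add: if_distrib[of "\<lambda>t. C _ * t"] sum.delta finite_PiE cong: if_cong)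
  finally show ?thesis by simp
qed


abbreviation subtree :: "nat \<Rightarrow> nat \<Rightarrow> (nat \<Rightarrow> nat) \<Rightarrow> nat \<Rightarrow> nat set" where
  "subtree d rt par k \<equiv> desc d rt par k \<union> {k}"

context
  fixes d rt :: nat and par :: "nat \<Rightarrow> nat"
begin

lemma tree_rel_iff: "(j, k) \<in> tree_rel d rt par \<longleftrightarrow> j \<in> {1..d} \<and> j \<noteq> rt \<and> k = par j"
  by (auto simp: tree_rel_def)

lemma tree_rel_trancl_iff:
  "(j, k) \<in> (tree_rel d rt par)\<^sup>+ \<longleftrightarrow>
     j \<in> {1..d} \<and> j \<noteq> rt \<and> (par j = k \<or> (par j, k) \<in> (tree_rel d rt par)\<^sup>+)"
proof
  assume "(j, k) \<in> (tree_rel d rt par)\<^sup>+"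
  then show "j \<in> {1..d} \<and> j \<noteq> rt \<and> (par j = k \<or> (par j, k) \<in> (tree_rel d rt par)\<^sup>+)"
    by (cases rule: converse_tranclE) (auto simp: tree_rel_iff)
next
  assume "j \<in> {1..d} \<and> j \<noteq> rt \<and> (par j = k \<or> (par j, k) \<in> (tree_rel d rt par)\<^sup>+)"
  moreover have "(j, par j) \<in> tree_rel d rt par" if "j \<in> {1..d}" "j \<noteq> rt"
    using that by (simp add: tree_rel_iff)
  ultimately show "(j, k) \<in> (tree_rel d rt par)\<^sup>+"
    by (auto intro: trancl_into_trancl2)
qed

lemma root_not_below: "(rt, k) \<notin> (tree_rel d rt par)\<^sup>+"
  using tree_rel_trancl_iff by blast

lemma root_notin_desc: "rt \<notin> desc d rt par k"
  using root_not_below by (simp add: desc_def)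

lemma desc_subset: "desc d rt par k \<subseteq> {1..d}"
  by (auto simp: desc_def)

lemma finite_children: "finite (children d rt par k)"
  by (simp add: children_def)

lemma desc_eq_UN_children: "desc d rt par k = (\<Union>w\<in>children d rt par k. subtree d rt par w)"
proof
  show "desc d rt par k \<subseteq> (\<Union>w\<in>children d rt par k. subtree d rt par w)"
  proof
    fix j assume "j \<in> desc d rt par k"
    then have j: "j \<in> {1..d}" "(j, k) \<in> (tree_rel d rt par)\<^sup>+" by (auto simp: desc_def)
    from j(2) show "j \<in> (\<Union>w\<in>children d rt par k. subtree d rt par w)"
    proof (cases rule: tranclE)
      case base
      then show ?thesis by (auto simp: tree_rel_iff children_def)
    next
      case (step w)
      then have "w \<in> children d rt par k" by (auto simp: tree_rel_iff children_def)
      with step j show ?thesis by (auto simp: desc_def)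
    qed
  qed
next
  show "(\<Union>w\<in>children d rt par k. subtree d rt par w) \<subseteq> desc d rt par k"
  proof
    fix j assume "j \<in> (\<Union>w\<in>children d rt par k. subtree d rt par w)"
    then obtain w where w: "w \<in> children d rt par k" "j \<in> subtree d rt par w" by blast
    then have "(w, k) \<in> tree_rel d rt par" by (auto simp: tree_rel_iff children_def)
    with w show "j \<in> desc d rt par k"
      by (auto simp: desc_def children_def intro: trancl_into_trancl)
  qed
qed

lemma subtree_child_subset: "w \<in> children d rt par k \<Longrightarrow> subtree d rt par w \<subseteq> desc d rt par k"
  using desc_eq_UN_children by blast

lemma children_subset_desc_of_subtree:
  assumes "j \<in> subtree d rt par k"
  shows "children d rt par j \<subseteq> desc d rt par k"
proof
  fix w assume "w \<in> children d rt par j"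
  then have "(w, j) \<in> tree_rel d rt par" "w \<in> {1..d}" by (auto simp: tree_rel_iff children_def)
  then show "w \<in> desc d rt par k"
    using assms by (auto simp: desc_def intro: trancl_into_trancl2)
qed

lemma ancestors_comparable:
  assumes "(j, a) \<in> (tree_rel d rt par)\<^sup>+" and "(j, b) \<in> (tree_rel d rt par)\<^sup>+"
  shows "a = b \<or> (a, b) \<in> (tree_rel d rt par)\<^sup>+ \<or> (b, a) \<in> (tree_rel d rt par)\<^sup>+"
  using assms
proof (induction arbitrary: b rule: converse_trancl_induct)
  case (base y)
  then show ?case using tree_rel_trancl_iff[of y b] by (auto simp: tree_rel_iff)
next
  case (step y z)
  have "par y = b \<or> (par y, b) \<in> (tree_rel d rt par)\<^sup>+"
    using step.prems tree_rel_trancl_iff by blast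
  moreover have "z = par y"
    using step.hyps(1) by (simp add: tree_rel_iff)
  ultimately show ?case using step by auto
qed

lemma children_nonroot: "w \<in> children d rt par k \<Longrightarrow> w \<in> {1..d} - {rt}"
  by (auto simp: children_def)

context
  assumes tree: "rooted_tree d rt par"
begin

lemma root_in: "rt \<in> {1..d}"
  using tree by (simp add: rooted_tree_def)

text \<open>Every vertex reaches the root, and the root has no ancestor: hence no cycles.\<close>
lemma tree_rel_irrefl: "(k, k) \<notin> (tree_rel d rt par)\<^sup>+"
proof
  assume kk: "(k, k) \<in> (tree_rel d rt par)\<^sup>+"
  then have "k \<in> {1..d} - {rt}" using tree_rel_trancl_iff by blast
  then have "(k, rt) \<in> (tree_rel d rt par)\<^sup>+" using tree by (simp add: rooted_tree_def)
  have "(z, k) \<in> (tree_rel d rt par)\<^sup>+" if "(k, z) \<in> (tree_rel d rt par)\<^sup>+" for z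
    using that
  proof (induction rule: trancl_induct)
    case (base y)
    then show ?case
      using kk tree_rel_trancl_iff[of k k] by (auto simp: tree_rel_iff)
  next
    case (step y z)
    then show ?case
      using kk tree_rel_trancl_iff[of y k] by (auto simp: tree_rel_iff)
  qed
  with \<open>(k, rt) \<in> (tree_rel d rt par)\<^sup>+\<close> root_not_below show False by blast
qed

lemma notin_desc_self: "k \<notin> desc d rt par k"
  using tree_rel_irrefl by (simp add: desc_def)

lemma notin_children_self: "k \<notin> children d rt par k"
  using notin_desc_self subtree_child_subset by blast

lemma desc_root: "desc d rt par rt = {1..d} - {rt}"
proof -
  have "(w, rt) \<in> (tree_rel d rt par)\<^sup>+" if "w \<in> {1..d} - {rt}" for w
    using tree that by (simp add: rooted_tree_def)
  then have "{1..d} - {rt} \<subseteq> desc d rt par rt"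
    unfolding desc_def by blast
  moreover have "desc d rt par rt \<subseteq> {1..d} - {rt}"
    using desc_subset root_notin_desc by blast
  ultimately show ?thesis by (rule antisym[rotated])
qed

lemma subtree_root: "subtree d rt par rt = {1..d}"
  unfolding desc_root using root_in by blast

lemma subtree_subset: "k \<in> {1..d} \<Longrightarrow> subtree d rt par k \<subseteq> {1..d}"
  using desc_subset by auto

lemma subtrees_of_children_disjoint:
  assumes w: "w \<in> children d rt par k" and w': "w' \<in> children d rt par k" and "w \<noteq> w'"
  shows "subtree d rt par w \<inter> subtree d rt par w' = {}"
proof (rule ccontr)
  have below_sibling: False
    if "(u, v) \<in> (tree_rel d rt par)\<^sup>+" "u \<in> children d rt par k" "v \<in> children d rt par k" for u v
  proof -
    have "k = v \<or> (k, v) \<in> (tree_rel d rt par)\<^sup>+"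
      using that tree_rel_trancl_iff[of u v] by (auto simp: children_def)
    moreover have "(v, k) \<in> tree_rel d rt par"
      using that(3) by (auto simp: tree_rel_iff children_def)
    ultimately have "(k, k) \<in> (tree_rel d rt par)\<^sup>+"
      by (metis r_into_trancl trancl_into_trancl)
    then show False
      using tree_rel_irrefl by blast
  qed
  assume "subtree d rt par w \<inter> subtree d rt par w' \<noteq> {}"
  then obtain j where "j = w \<or> (j, w) \<in> (tree_rel d rt par)\<^sup>+" "j = w' \<or> (j, w') \<in> (tree_rel d rt par)\<^sup>+"
    by (auto simp: desc_def)
  then have "(w, w') \<in> (tree_rel d rt par)\<^sup>+ \<or> (w', w) \<in> (tree_rel d rt par)\<^sup>+"
    using ancestors_comparable \<open>w \<noteq> w'\<close> by blast
  then show False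
    using below_sibling w w' by blast
qed

lemma card_desc_child_less:
  "w \<in> children d rt par k \<Longrightarrow> card (desc d rt par w) < card (desc d rt par k)"
  using subtree_child_subset[of w k] notin_desc_self[of w]
  by (intro psubset_card_mono) (auto intro: finite_subset[OF desc_subset])

end

end


lemma glue_UN_invariant:
  assumes "finite W" and "\<And>w u x. w \<in> W \<Longrightarrow> h (glue (B w) u x) = h x"
  shows "h (glue (\<Union>w\<in>W. B w) u x) = h x"
  using assms
proof (induction W arbitrary: x rule: finite_induct)
  case (insert w W)
  have "glue (\<Union>v\<in>insert w W. B v) u x = glue (B w) u (glue (\<Union>v\<in>W. B v) u x)"
    by (auto simp: glue_def fun_eq_iff)
  with insert show ?case by simp
qed (simp add: glue_def)

lemma glue_insert_point:
  "glue (D \<union> {k}) x v = glue D x (glue (D \<union> {k}) ((\<lambda>_. undefined)(k := x k)) v)"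
  by (auto simp: glue_def fun_eq_iff)

locale ttns_setting =
  fixes d rt :: nat and par n r :: "nat \<Rightarrow> nat"
    and p :: "(nat \<Rightarrow> nat) \<Rightarrow> real"
    and Phi :: "nat \<Rightarrow> (nat \<Rightarrow> nat) \<Rightarrow> nat \<Rightarrow> real"
    and Psi :: "nat \<Rightarrow> nat \<Rightarrow> (nat \<Rightarrow> nat) \<Rightarrow> real"
  assumes tree: "rooted_tree d rt par"
    and factor: "\<forall>w \<in> {1..d} - {rt}. \<forall>x \<in> idx {1..d} n.
        p x = (\<Sum>a = 1..r w. Phi w (restrict x (desc d rt par w \<union> {w})) a
                              * Psi w a (restrict x (nondesc d rt par w)))"
    and rank: "\<forall>w \<in> {1..d} - {rt}.
        unfolding_rank n p (desc d rt par w \<union> {w}) (nondesc d rt par w) = r w"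
begin

abbreviation "X \<equiv> idx {1..d} n"
abbreviation "ch \<equiv> children d rt par"
abbreviation "sub k \<equiv> desc d rt par k \<union> {k}"
abbreviation "ranks \<equiv> \<lambda>e. {1..r e}"

lemmas root_in = root_in[OF tree] and desc_root = desc_root[OF tree]
  and subtree_root = subtree_root[OF tree] and subtree_subset = subtree_subset[OF tree]
  and notin_desc_self = notin_desc_self[OF tree] and notin_children_self = notin_children_self[OF tree]
  and subtrees_of_children_disjoint = subtrees_of_children_disjoint[OF tree]

lemma p_block_separable:
  assumes w: "w \<in> {1..d} - {rt}"
  shows "block_separable n {1..d} (sub w) (Phi w) (r w) p"
proof -
  have "restrict (glue (sub w) u x) (nondesc d rt par w) = restrict x (nondesc d rt par w)" for u x
    by (rule restrict_glue_disjoint) (auto simp: nondesc_def)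
  then show ?thesis
    unfolding block_separable_def using factor w
    by (intro exI[of _ "\<lambda>a x. Psi w a (restrict x (nondesc d rt par w))"]) simp
qed

lemma Phi_unfolding_factorisation:
  assumes w: "w \<in> {1..d} - {rt}"
  shows "\<exists>l. left_inverse_on (idx (sub w) n) (Phi w) (r w) l"
    and "\<forall>a\<in>{1..r w}. \<exists>c. \<forall>u\<in>idx (sub w) n.
           Phi w u a = (\<Sum>v\<in>idx (nondesc d rt par w) n. c v * p (glue (sub w) u v))"
proof -
  let ?N = "nondesc d rt par w"
  have "p (glue (sub w) u v) = (\<Sum>a=1..r w. Phi w u a * Psi w a v)"
    if u: "u \<in> idx (sub w) n" and v: "v \<in> idx ?N n" for u v
  proof -
    have "sub w \<union> ?N = {1..d}"
      using subtree_subset w by (auto simp: nondesc_def)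
    then have "glue (sub w) u v \<in> X"
      using glue_PiE[OF u v] by simp
    moreover have "restrict (glue (sub w) u v) ?N = v"
      using v restrict_glue_disjoint[of "sub w" ?N] by (simp add: nondesc_def)
    ultimately show ?thesis
      using factor w restrict_glue_self[OF u] by simp
  qed
  note factor_glue = this
  have dim: "real_fun.dim ((\<lambda>v u. if u \<in> idx (sub w) n then p (glue (sub w) u v) else 0) ` idx ?N n) = r w"
    using bspec[OF rank w] unfolding unfolding_rank_def .
  have fin: "finite (idx (sub w) n)" "finite (idx ?N n)"
    by (auto intro!: finite_PiE intro: finite_subset[OF desc_subset] simp: nondesc_def)
  show "\<exists>l. left_inverse_on (idx (sub w) n) (Phi w) (r w) l"
    by (rule unfolding_factorisation_rank(1)[OF fin factor_glue dim])
  show "\<forall>a\<in>{1..r w}. \<exists>c. \<forall>u\<in>idx (sub w) n.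
           Phi w u a = (\<Sum>v\<in>idx ?N n. c v * p (glue (sub w) u v))"
    by (rule unfolding_factorisation_rank(2)[OF fin factor_glue dim])
qed

definition linv :: "nat \<Rightarrow> nat \<Rightarrow> (nat \<Rightarrow> nat) \<Rightarrow> real" where
  "linv w = (SOME l. left_inverse_on (idx (sub w) n) (Phi w) (r w) l)"

lemma left_inverse_linv:
  "w \<in> {1..d} - {rt} \<Longrightarrow> left_inverse_on (idx (sub w) n) (Phi w) (r w) (linv w)"
  unfolding linv_def using Phi_unfolding_factorisation(1) by (rule someI_ex)

lemma expansion_over_children:
  assumes k: "k \<in> {1..d}"
  obtains H where "\<forall>x\<in>X. p x = (\<Sum>\<beta>\<in>PiE (ch k) ranks. Phi_children d rt par Phi k x \<beta> * H \<beta> x)"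
    and "\<And>\<beta> u x. H \<beta> (glue (desc d rt par k) u x) = H \<beta> x"
proof -
  obtain ws where ws: "distinct ws" "set ws = ch k"
    using finite_distinct_list[OF finite_children] by blast
  have ch: "w \<in> {1..d} - {rt}" if "w \<in> ch k" for w
    using that by (rule children_nonroot)
  define H where "H \<beta> = contract_blocks n sub linv ws \<beta> p" for \<beta>
  have B: "\<forall>w\<in>set ws. sub w \<subseteq> {1..d}"
    unfolding ws(2) using ch subtree_subset by blast
  have disj: "\<forall>v\<in>set ws. \<forall>w\<in>set ws. v \<noteq> w \<longrightarrow> sub v \<inter> sub w = {}"
    unfolding ws(2) using subtrees_of_children_disjoint by blast
  have L: "\<forall>w\<in>set ws. left_inverse_on (idx (sub w) n) (Phi w) (r w) (linv w)"
    unfolding ws(2) using ch left_inverse_linv by blast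
  have sep: "\<forall>w\<in>set ws. block_separable n {1..d} (sub w) (Phi w) (r w) p"
    unfolding ws(2) using ch p_block_separable by blast
  have "p x = (\<Sum>\<beta>\<in>PiE (set ws) ranks.
      (\<Prod>w\<in>set ws. Phi w (restrict x (sub w)) (\<beta> w)) * contract_blocks n sub linv ws \<beta> p x)"
    if "x \<in> X" for x
    by (rule contract_blocks_expansion[OF ws(1) B disj L sep that])
  then have expansion: "\<forall>x\<in>X. p x = (\<Sum>\<beta>\<in>PiE (ch k) ranks. Phi_children d rt par Phi k x \<beta> * H \<beta> x)"
    unfolding H_def Phi_children_def ws(2) by blast
  have invariant: "H \<beta> (glue (desc d rt par k) u x) = H \<beta> x" for \<beta> u x
  proof -
    have "H \<beta> (glue (sub w) u x) = H \<beta> x" if "w \<in> ch k" for w u x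
    proof -
      have "\<forall>v\<in>set ws. v = w \<or> sub v \<inter> sub w = {}"
        unfolding ws(2) using that subtrees_of_children_disjoint by blast
      moreover have "w \<in> set ws \<or> (\<forall>u x. p (glue (sub w) u x) = p x)"
        using ws(2) that by blast
      ultimately show ?thesis
        unfolding H_def by (rule contract_blocks_glue_invariant)
    qed
    then show ?thesis
      unfolding desc_eq_UN_children[of d rt par k]
      by (rule glue_UN_invariant[where h="H \<beta>" and B=sub, OF finite_children])
  qed
  from expansion invariant show ?thesis by (rule that)
qed

lemma Phi_children_glue_subtree:
  "Phi_children d rt par Phi k (glue (sub k) x v) \<beta> = Phi_children d rt par Phi k x \<beta>"
  unfolding Phi_children_def
proof (rule prod.cong[OF refl])
  fix w assume "w \<in> ch k"
  then have "sub w \<subseteq> sub k" using subtree_child_subset by blast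
  then show "Phi w (restrict (glue (sub k) x v) (sub w)) (\<beta> w) = Phi w (restrict x (sub w)) (\<beta> w)"
    by (simp add: restrict_glue_subset)
qed

lemma Phi_children_fun_upd:
  "Phi_children d rt par Phi k (x(k := xk)) \<beta> = Phi_children d rt par Phi k x \<beta>"
  unfolding Phi_children_def
proof (rule prod.cong[OF refl])
  fix w assume "w \<in> ch k"
  then have "k \<notin> sub w" using subtree_child_subset notin_desc_self by blast
  then show "Phi w (restrict (x(k := xk)) (sub w)) (\<beta> w) = Phi w (restrict x (sub w)) (\<beta> w)"
    by simp
qed

lemma cde_root_iff:
  "cde d rt par n r p Phi rt G \<longleftrightarrow>
     (\<forall>x\<in>X. (\<Sum>\<beta>\<in>PiE (ch rt) ranks. Phi_children d rt par Phi rt x \<beta> * G (x rt) \<beta>) = p x)"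
  by (simp add: cde_def)

text \<open>The leaf equation is the special case without children of the interior one.\<close>
lemma cde_nonroot_iff:
  assumes k: "k \<in> {1..d} - {rt}"
  shows "cde d rt par n r p Phi k G \<longleftrightarrow>
    (\<forall>x\<in>idx (sub k) n. \<forall>a\<in>{1..r k}.
       (\<Sum>\<beta>\<in>PiE (ch k) ranks. Phi_children d rt par Phi k x \<beta> * G (x k) (\<beta>(k := a))) = Phi k x a)"
proof (cases "ch k = {}")
  case True
  have upd: "(\<lambda>_. undefined)(k := a) = (\<lambda>e\<in>{k}. a)" for a :: nat
    by (auto simp: fun_eq_iff)
  have "desc d rt par k = {}"
    using True desc_eq_UN_children[of d rt par k] by simp
  then have rhs: "(\<forall>x\<in>idx (sub k) n. \<forall>a\<in>{1..r k}.
       (\<Sum>\<beta>\<in>PiE (ch k) ranks. Phi_children d rt par Phi k x \<beta> * G (x k) (\<beta>(k := a))) = Phi k x a)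
    \<longleftrightarrow> (\<forall>x\<in>idx {k} n. \<forall>a\<in>{1..r k}. G (x k) (\<lambda>e\<in>{k}. a) = Phi k x a)"
    using True by (simp add: Phi_children_def upd)
  have lhs: "cde d rt par n r p Phi k G \<longleftrightarrow>
     (\<forall>xk\<in>{1..n k}. \<forall>a\<in>{1..r k}. G xk (\<lambda>e\<in>{k}. a) = Phi k (\<lambda>i\<in>{k}. xk) a)"
    using k True by (simp add: cde_def)
  have xe: "x = (\<lambda>i\<in>{k}. x k)" if "x \<in> idx {k} n" for x
    using that by (auto simp: PiE_iff extensional_def fun_eq_iff)
  show ?thesis
    unfolding lhs rhs
  proof (intro iffI ballI)
    fix x a assume H: "\<forall>xk\<in>{1..n k}. \<forall>a\<in>{1..r k}. G xk (\<lambda>e\<in>{k}. a) = Phi k (\<lambda>i\<in>{k}. xk) a"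
      and x: "x \<in> idx {k} n" and a: "a \<in> {1..r k}"
    have "x k \<in> {1..n k}" using x by auto
    then show "G (x k) (\<lambda>e\<in>{k}. a) = Phi k x a"
      using H a xe[OF x] by metis
  next
    fix xk a assume H: "\<forall>x\<in>idx {k} n. \<forall>a\<in>{1..r k}. G (x k) (\<lambda>e\<in>{k}. a) = Phi k x a"
      and xk: "xk \<in> {1..n k}" and a: "a \<in> {1..r k}"
    have "(\<lambda>i\<in>{k}. xk) \<in> idx {k} n" using xk by auto
    then show "G xk (\<lambda>e\<in>{k}. a) = Phi k (\<lambda>i\<in>{k}. xk) a"
      using H a by fastforce
  qed
qed (use k in \<open>simp add: cde_def\<close>)

lemma sum_mult_sum_swap:
  fixes f :: "'a \<Rightarrow> real"
  shows "(\<Sum>u\<in>A. f u * (\<Sum>b\<in>B. g b * h u b)) = (\<Sum>b\<in>B. g b * (\<Sum>u\<in>A. f u * h u b))"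
  unfolding sum_distrib_left by (subst sum.swap) (simp add: mult_ac)

lemma cde_root_solvable: "\<exists>G. cde d rt par n r p Phi rt G"
proof -
  obtain H where H: "\<forall>x\<in>X. p x = (\<Sum>\<beta>\<in>PiE (ch rt) ranks. Phi_children d rt par Phi rt x \<beta> * H \<beta> x)"
    and H_inv: "\<And>\<beta> u x. H \<beta> (glue (desc d rt par rt) u x) = H \<beta> x"
    using expansion_over_children[OF root_in] by blast
  define G where "G xk \<beta> = H \<beta> ((\<lambda>_. undefined)(rt := xk))" for xk \<beta>
  have "H \<beta> x = G (x rt) \<beta>" if x: "x \<in> X" for \<beta> x
  proof -
    have "x = glue (desc d rt par rt) x ((\<lambda>_. undefined)(rt := x rt))"
      using x by (auto simp: glue_def desc_root fun_eq_iff PiE_iff extensional_def)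
    then have "H \<beta> x = H \<beta> (glue (desc d rt par rt) x ((\<lambda>_. undefined)(rt := x rt)))"
      by simp
    then show ?thesis
      unfolding G_def H_inv .
  qed
  then have "cde d rt par n r p Phi rt G"
    unfolding cde_root_iff using H by simp
  then show ?thesis by (rule exI[of _ G])
qed

lemma cde_nonroot_solvable:
  assumes k: "k \<in> {1..d} - {rt}"
  shows "\<exists>G. cde d rt par n r p Phi k G"
proof -
  let ?N = "idx (nondesc d rt par k) n"
  obtain H where H: "\<forall>x\<in>X. p x = (\<Sum>\<beta>\<in>PiE (ch k) ranks. Phi_children d rt par Phi k x \<beta> * H \<beta> x)"
    and H_inv: "\<And>\<beta> u x. H \<beta> (glue (desc d rt par k) u x) = H \<beta> x"
    using expansion_over_children k by blast
  obtain c where c: "\<forall>a\<in>{1..r k}. \<forall>u\<in>idx (sub k) n. Phi k u a = (\<Sum>v\<in>?N. c a v * p (glue (sub k) u v))"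
    using bchoice[OF Phi_unfolding_factorisation(2)[OF k]] by blast
  define G where "G xk \<alpha> =
    (\<Sum>v\<in>?N. c (\<alpha> k) v * H (restrict \<alpha> (ch k)) (glue (sub k) ((\<lambda>_. undefined)(k := xk)) v))" for xk \<alpha>
  have "(\<Sum>\<beta>\<in>PiE (ch k) ranks. Phi_children d rt par Phi k x \<beta> * G (x k) (\<beta>(k := a))) = Phi k x a"
    if x: "x \<in> idx (sub k) n" and a: "a \<in> {1..r k}" for x a
  proof -
    define x\<^sub>0 where "x\<^sub>0 v = glue (sub k) ((\<lambda>_. undefined)(k := x k)) v" for v
    have G_upd: "G (x k) (\<beta>(k := a)) = (\<Sum>v\<in>?N. c a v * H \<beta> (x\<^sub>0 v))" if "\<beta> \<in> PiE (ch k) ranks" for \<beta>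
    proof -
      have "restrict (\<beta>(k := a)) (ch k) = \<beta>"
        using that notin_children_self[of k] by simp
      then show ?thesis by (simp add: G_def x\<^sub>0_def)
    qed
    have p_glue: "p (glue (sub k) x v) = (\<Sum>\<beta>\<in>PiE (ch k) ranks. Phi_children d rt par Phi k x \<beta> * H \<beta> (x\<^sub>0 v))"
      if v: "v \<in> ?N" for v
    proof -
      have "sub k \<union> nondesc d rt par k = {1..d}"
        using subtree_subset k by (auto simp: nondesc_def)
      then have "glue (sub k) x v \<in> X"
        using glue_PiE[OF x v] by simp
      moreover have "H \<beta> (glue (sub k) x v) = H \<beta> (x\<^sub>0 v)" for \<beta>
        unfolding x\<^sub>0_def by (subst glue_insert_point) (rule H_inv)
      ultimately show ?thesis
        using H Phi_children_glue_subtree[of k x v] by simp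
    qed
    have "Phi k x a = (\<Sum>v\<in>?N. c a v * p (glue (sub k) x v))"
      using c x a by blast
    also have "\<dots> = (\<Sum>v\<in>?N. c a v * (\<Sum>\<beta>\<in>PiE (ch k) ranks. Phi_children d rt par Phi k x \<beta> * H \<beta> (x\<^sub>0 v)))"
      using p_glue by simp
    also have "\<dots> = (\<Sum>\<beta>\<in>PiE (ch k) ranks. Phi_children d rt par Phi k x \<beta> * (\<Sum>v\<in>?N. c a v * H \<beta> (x\<^sub>0 v)))"
      by (rule sum_mult_sum_swap)
    also have "\<dots> = (\<Sum>\<beta>\<in>PiE (ch k) ranks. Phi_children d rt par Phi k x \<beta> * G (x k) (\<beta>(k := a)))"
      using G_upd by simp
    finally show ?thesis ..
  qed
  then have "cde d rt par n r p Phi k G"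
    unfolding cde_nonroot_iff[OF k] by blast
  then show ?thesis by (rule exI[of _ G])
qed

lemma coefficients_vanish_on_subtree:
  assumes xk: "xk \<in> {1..n k}"
    and zero: "\<And>x. x \<in> idx (sub k) n \<Longrightarrow> x k = xk \<Longrightarrow>
      (\<Sum>\<beta>\<in>PiE (ch k) ranks. Phi_children d rt par Phi k x \<beta> * C \<beta>) = 0"
    and \<beta>: "\<beta> \<in> PiE (ch k) ranks"
  shows "C \<beta> = 0"
proof -
  have zero': "\<forall>y\<in>idx (\<Union>w\<in>ch k. sub w) n.
    (\<Sum>\<beta>\<in>PiE (ch k) ranks. C \<beta> * (\<Prod>w\<in>ch k. Phi w (restrict y (sub w)) (\<beta> w))) = 0"
  proof
    fix y assume y: "y \<in> idx (\<Union>w\<in>ch k. sub w) n"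
    have "y \<in> idx (desc d rt par k) n"
      using y desc_eq_UN_children[of d rt par k] by simp
    then have "y(k := xk) \<in> idx (insert k (desc d rt par k)) n"
      using xk by (intro PiE_fun_upd) auto
    then have "y(k := xk) \<in> idx (sub k) n"
      by simp
    from zero[OF this] have "(\<Sum>\<beta>\<in>PiE (ch k) ranks. Phi_children d rt par Phi k y \<beta> * C \<beta>) = 0"
      by (simp add: Phi_children_fun_upd)
    then show "(\<Sum>\<beta>\<in>PiE (ch k) ranks. C \<beta> * (\<Prod>w\<in>ch k. Phi w (restrict y (sub w)) (\<beta> w))) = 0"
      by (simp add: Phi_children_def mult.commute)
  qed
  have L: "\<forall>w\<in>ch k. left_inverse_on (idx (sub w) n) (Phi w) (r w) (linv w)"
    using children_nonroot left_inverse_linv by blast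
  show ?thesis
    by (rule tensor_coefficients_zero[where B=sub and W="ch k" and \<Phi>=Phi and L=linv,
          OF finite_children subtrees_of_children_disjoint L zero' \<beta>])
qed

lemma cde_root_unique:
  assumes G: "cde d rt par n r p Phi rt G" and G': "cde d rt par n r p Phi rt G'"
  shows "same_core d rt par n r rt G G'"
proof -
  have "G xk \<beta> - G' xk \<beta> = 0" if xk: "xk \<in> {1..n rt}" and \<beta>: "\<beta> \<in> PiE (ch rt) ranks" for xk \<beta>
  proof (rule coefficients_vanish_on_subtree[OF xk _ \<beta>])
    fix x assume x: "x \<in> idx (sub rt) n" and "x rt = xk"
    moreover have "x \<in> X"
      using x by (simp only: subtree_root)
    ultimately have "(\<Sum>\<beta>\<in>PiE (ch rt) ranks. Phi_children d rt par Phi rt x \<beta> * G xk \<beta>) = p x"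
      "(\<Sum>\<beta>\<in>PiE (ch rt) ranks. Phi_children d rt par Phi rt x \<beta> * G' xk \<beta>) = p x"
      using G G' unfolding cde_root_iff by auto
    then show "(\<Sum>\<beta>\<in>PiE (ch rt) ranks. Phi_children d rt par Phi rt x \<beta> * (G xk \<beta> - G' xk \<beta>)) = 0"
      by (simp add: right_diff_distrib sum_subtractf)
  qed
  then show ?thesis
    by (simp add: same_core_def nbr_edges_def)
qed

lemma cde_nonroot_unique:
  assumes k: "k \<in> {1..d} - {rt}"
    and G: "cde d rt par n r p Phi k G" and G': "cde d rt par n r p Phi k G'"
  shows "same_core d rt par n r k G G'"
proof -
  have "G xk \<alpha> = G' xk \<alpha>" if xk: "xk \<in> {1..n k}" and \<alpha>: "\<alpha> \<in> PiE (insert k (ch k)) ranks" for xk \<alpha>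
  proof -
    define a where "a = \<alpha> k"
    have a: "a \<in> {1..r k}" and \<beta>: "restrict \<alpha> (ch k) \<in> PiE (ch k) ranks"
      using \<alpha> by (auto simp: a_def)
    have "G xk ((restrict \<alpha> (ch k))(k := a)) - G' xk ((restrict \<alpha> (ch k))(k := a)) = 0"
    proof (rule coefficients_vanish_on_subtree[OF xk _ \<beta>])
      fix x assume "x \<in> idx (sub k) n" and "x k = xk"
      then have "(\<Sum>\<beta>\<in>PiE (ch k) ranks. Phi_children d rt par Phi k x \<beta> * G xk (\<beta>(k := a))) = Phi k x a"
        "(\<Sum>\<beta>\<in>PiE (ch k) ranks. Phi_children d rt par Phi k x \<beta> * G' xk (\<beta>(k := a))) = Phi k x a"
        using G G' a unfolding cde_nonroot_iff[OF k] by auto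
      then show "(\<Sum>\<beta>\<in>PiE (ch k) ranks.
          Phi_children d rt par Phi k x \<beta> * (G xk (\<beta>(k := a)) - G' xk (\<beta>(k := a)))) = 0"
        by (simp add: right_diff_distrib sum_subtractf)
    qed
    moreover have "(restrict \<alpha> (ch k))(k := a) = \<alpha>"
      using \<alpha> by (auto simp: a_def fun_eq_iff PiE_iff extensional_def)
    ultimately show ?thesis by simp
  qed
  then show ?thesis
    using k by (simp add: same_core_def nbr_edges_def)
qed

lemma prod_desc_children:
  "(\<Prod>j\<in>desc d rt par k. f j) = (\<Prod>c\<in>ch k. \<Prod>j\<in>sub c. (f j :: real))"
  unfolding desc_eq_UN_children[of d rt par k]
  by (rule prod.UNION_disjoint)
    (use finite_children subtrees_of_children_disjoint in \<open>auto intro: finite_subset[OF desc_subset]\<close>)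

lemma nbr_edges_subset_subtree:
  assumes c: "c \<in> {1..d} - {rt}" and j: "j \<in> sub c"
  shows "nbr_edges d rt par j \<subseteq> sub c"
proof -
  have "j \<noteq> rt"
    using j c root_notin_desc[where k=c] by auto
  then show ?thesis
    using children_subset_desc_of_subtree[OF j] j by (auto simp: nbr_edges_def)
qed

definition subtree_contraction ::
  "(nat \<Rightarrow> nat \<Rightarrow> (nat \<Rightarrow> nat) \<Rightarrow> real) \<Rightarrow> (nat \<Rightarrow> nat) \<Rightarrow> nat \<Rightarrow> nat \<Rightarrow> real" where
  "subtree_contraction Gs x w a = (\<Sum>\<gamma>\<in>PiE (desc d rt par w \<union> {w}) (\<lambda>e. {1..r e}).
     if \<gamma> w = a then (\<Prod>j\<in>desc d rt par w \<union> {w}. Gs j (x j) (restrict \<gamma> (nbr_edges d rt par j))) else 0)"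

lemma sum_over_children_contractions:
  fixes Gs :: "nat \<Rightarrow> nat \<Rightarrow> (nat \<Rightarrow> nat) \<Rightarrow> real" and x :: "nat \<Rightarrow> nat"
    and g :: "(nat \<Rightarrow> nat) \<Rightarrow> real"
  defines "F \<gamma> j \<equiv> Gs j (x j) (restrict \<gamma> (nbr_edges d rt par j))"
  assumes Q: "\<And>c a. c \<in> ch k \<Longrightarrow> a \<in> ranks c \<Longrightarrow>
    Phi c (restrict x (sub c)) a = subtree_contraction Gs x c a"
  shows "(\<Sum>\<beta>\<in>PiE (ch k) ranks. (\<Prod>c\<in>ch k. Phi c (restrict x (sub c)) (\<beta> c)) * g \<beta>)
    = (\<Sum>\<gamma>\<in>PiE (desc d rt par k) ranks. (\<Prod>c\<in>ch k. \<Prod>j\<in>sub c. F \<gamma> j) * g (restrict \<gamma> (ch k)))"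
proof -
  define P where "P c \<gamma> = (\<Prod>j\<in>sub c. F \<gamma> j)" for c \<gamma>
  have P_restrict: "P c (restrict \<gamma> (sub c)) = P c \<gamma>" if "c \<in> ch k" for c \<gamma>
    unfolding P_def F_def
  proof (rule prod.cong[OF refl])
    fix j assume "j \<in> sub c"
    with that have "nbr_edges d rt par j \<subseteq> sub c"
      using children_nonroot nbr_edges_subset_subtree by blast
    then show "Gs j (x j) (restrict (restrict \<gamma> (sub c)) (nbr_edges d rt par j))
             = Gs j (x j) (restrict \<gamma> (nbr_edges d rt par j))"
      by (simp add: Int_absorb1)
  qed
  have Phi_prod: "(\<Prod>c\<in>ch k. Phi c (restrict x (sub c)) (\<beta> c))
     = (\<Sum>\<gamma>\<in>PiE (desc d rt par k) ranks. if \<beta> = restrict \<gamma> (ch k) then (\<Prod>c\<in>ch k. P c \<gamma>) else 0)"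
    if \<beta>: "\<beta> \<in> PiE (ch k) ranks" for \<beta>
  proof -
    have "(\<Prod>c\<in>ch k. Phi c (restrict x (sub c)) (\<beta> c))
       = (\<Prod>c\<in>ch k. \<Sum>\<gamma>\<in>PiE (sub c) ranks. if \<gamma> c = \<beta> c then P c \<gamma> else 0)"
    proof (rule prod.cong[OF refl])
      fix c assume c: "c \<in> ch k"
      then have "\<beta> c \<in> ranks c" using \<beta> by auto
      from Q[OF c this]
      show "Phi c (restrict x (sub c)) (\<beta> c) = (\<Sum>\<gamma>\<in>PiE (sub c) ranks. if \<gamma> c = \<beta> c then P c \<gamma> else 0)"
        unfolding subtree_contraction_def P_def F_def .
    qed
    also have "\<dots> = (\<Sum>\<gamma>\<in>PiE (\<Union>c\<in>ch k. sub c) ranks.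
        \<Prod>c\<in>ch k. (\<lambda>\<gamma>. if \<gamma> c = \<beta> c then P c \<gamma> else 0) (restrict \<gamma> (sub c)))"
      by (rule prod_sum_blocks[OF finite_children subtrees_of_children_disjoint])
    also have "\<dots> = (\<Sum>\<gamma>\<in>PiE (desc d rt par k) ranks.
        if \<beta> = restrict \<gamma> (ch k) then (\<Prod>c\<in>ch k. P c \<gamma>) else 0)"
      unfolding desc_eq_UN_children[of d rt par k, symmetric]
    proof (rule sum.cong[OF refl])
      fix \<gamma>
      have "(\<forall>c\<in>ch k. \<gamma> c = \<beta> c) \<longleftrightarrow> \<beta> = restrict \<gamma> (ch k)"
        using \<beta> by (auto simp: fun_eq_iff PiE_iff extensional_def)
      moreover have "(\<lambda>\<gamma>. if \<gamma> c = \<beta> c then P c \<gamma> else 0) (restrict \<gamma> (sub c))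
        = (if \<gamma> c = \<beta> c then P c \<gamma> else 0)" if "c \<in> ch k" for c
        using P_restrict[OF that] by simp
      ultimately show "(\<Prod>c\<in>ch k. (\<lambda>\<gamma>. if \<gamma> c = \<beta> c then P c \<gamma> else 0) (restrict \<gamma> (sub c)))
        = (if \<beta> = restrict \<gamma> (ch k) then \<Prod>c\<in>ch k. P c \<gamma> else 0)"
        using prod_if_else_zero[OF finite_children, of "\<lambda>c. \<gamma> c = \<beta> c" "\<lambda>c. P c \<gamma>"]
        by (simp cong: prod.cong)
    qed
    finally show ?thesis .
  qed
  have "(\<Sum>\<beta>\<in>PiE (ch k) ranks. (\<Prod>c\<in>ch k. Phi c (restrict x (sub c)) (\<beta> c)) * g \<beta>)
     = (\<Sum>\<beta>\<in>PiE (ch k) ranks. \<Sum>\<gamma>\<in>PiE (desc d rt par k) ranks.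
          if \<beta> = restrict \<gamma> (ch k) then (\<Prod>c\<in>ch k. P c \<gamma>) * g \<beta> else 0)"
  proof (rule sum.cong[OF refl])
    fix \<beta> assume "\<beta> \<in> PiE (ch k) ranks"
    show "(\<Prod>c\<in>ch k. Phi c (restrict x (sub c)) (\<beta> c)) * g \<beta> = (\<Sum>\<gamma>\<in>PiE (desc d rt par k) ranks.
          if \<beta> = restrict \<gamma> (ch k) then (\<Prod>c\<in>ch k. P c \<gamma>) * g \<beta> else 0)"
      unfolding Phi_prod[OF \<open>\<beta> \<in> PiE (ch k) ranks\<close>] sum_distrib_right
      by (rule sum.cong[OF refl]) simp
  qed
  also have "\<dots> = (\<Sum>\<gamma>\<in>PiE (desc d rt par k) ranks. \<Sum>\<beta>\<in>PiE (ch k) ranks.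
          if \<beta> = restrict \<gamma> (ch k) then (\<Prod>c\<in>ch k. P c \<gamma>) * g \<beta> else 0)"
    by (rule sum.swap)
  also have "\<dots> = (\<Sum>\<gamma>\<in>PiE (desc d rt par k) ranks. (\<Prod>c\<in>ch k. P c \<gamma>) * g (restrict \<gamma> (ch k)))"
  proof (rule sum.cong[OF refl])
    fix \<gamma> assume "\<gamma> \<in> PiE (desc d rt par k) ranks"
    moreover have "ch k \<subseteq> desc d rt par k"
      using subtree_child_subset by blast
    ultimately have "restrict \<gamma> (ch k) \<in> PiE (ch k) ranks"
      by (auto simp: PiE_iff)
    then show "(\<Sum>\<beta>\<in>PiE (ch k) ranks. if \<beta> = restrict \<gamma> (ch k) then (\<Prod>c\<in>ch k. P c \<gamma>) * g \<beta> else 0)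
      = (\<Prod>c\<in>ch k. P c \<gamma>) * g (restrict \<gamma> (ch k))"
      by (simp add: sum.delta[OF finite_PiE[OF finite_children]])
  qed
  finally show ?thesis
    unfolding P_def .
qed

lemma Phi_eq_subtree_contraction:
  assumes Gs: "\<forall>k\<in>{1..d}. cde d rt par n r p Phi k (Gs k)"
  shows "w \<in> {1..d} - {rt} \<Longrightarrow> x \<in> X \<Longrightarrow> a \<in> ranks w \<Longrightarrow>
    Phi w (restrict x (sub w)) a = subtree_contraction Gs x w a"
proof (induction "card (desc d rt par w)" arbitrary: w a rule: less_induct)
  case less
  let ?F = "\<lambda>\<gamma> j. Gs j (x j) (restrict \<gamma> (nbr_edges d rt par j))"
  let ?D = "desc d rt par w"
  have w: "w \<in> {1..d} - {rt}" and x: "x \<in> X" and a: "a \<in> ranks w"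
    by fact+
  have IH: "Phi c (restrict x (sub c)) b = subtree_contraction Gs x c b"
    if "c \<in> ch w" "b \<in> ranks c" for c b
    by (rule less.hyps[OF card_desc_child_less[OF tree that(1)] children_nonroot[OF that(1)] x that(2)])
  have xw: "restrict x (sub w) \<in> idx (sub w) n"
    using x subtree_subset w by (auto simp: PiE_iff)
  have "cde d rt par n r p Phi w (Gs w)"
    using Gs w by blast
  from bspec[OF bspec[OF this[unfolded cde_nonroot_iff[OF w]] xw] a]
  have "Phi w (restrict x (sub w)) a
      = (\<Sum>\<beta>\<in>PiE (ch w) ranks. Phi_children d rt par Phi w (restrict x (sub w)) \<beta> * Gs w (x w) (\<beta>(w := a)))"
    by simp
  also have "\<dots> = (\<Sum>\<beta>\<in>PiE (ch w) ranks.
      (\<Prod>c\<in>ch w. Phi c (restrict x (sub c)) (\<beta> c)) * Gs w (x w) (\<beta>(w := a)))"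
  proof (rule sum.cong[OF refl])
    fix \<beta>
    have "restrict (restrict x (sub w)) (sub c) = restrict x (sub c)" if "c \<in> ch w" for c
    proof -
      have "sub c \<subseteq> sub w" using subtree_child_subset[OF that] by blast
      then show ?thesis by (simp only: restrict_restrict Int_absorb1)
    qed
    then show "Phi_children d rt par Phi w (restrict x (sub w)) \<beta> * Gs w (x w) (\<beta>(w := a))
      = (\<Prod>c\<in>ch w. Phi c (restrict x (sub c)) (\<beta> c)) * Gs w (x w) (\<beta>(w := a))"
      by (simp add: Phi_children_def)
  qed
  also have "\<dots> = (\<Sum>\<gamma>\<in>PiE ?D ranks. (\<Prod>c\<in>ch w. \<Prod>j\<in>sub c. ?F \<gamma> j) * Gs w (x w) ((restrict \<gamma> (ch w))(w := a)))"
    using IH by (rule sum_over_children_contractions)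
  also have "\<dots> = (\<Sum>\<gamma>\<in>PiE ?D ranks. \<Prod>j\<in>insert w ?D. ?F (\<gamma>(w := a)) j)"
  proof (rule sum.cong[OF refl])
    fix \<gamma>
    have top: "?F (\<gamma>(w := a)) w = Gs w (x w) ((restrict \<gamma> (ch w))(w := a))"
      using w notin_children_self[of w] by (simp add: nbr_edges_def fun_eq_iff)
    have below: "?F (\<gamma>(w := a)) j = ?F \<gamma> j" if "j \<in> ?D" for j
    proof -
      have "ch j \<subseteq> ?D"
        using that by (intro children_subset_desc_of_subtree) auto
      then have "w \<notin> ch j" "w \<noteq> j"
        using that notin_desc_self[of w] by blast+
      then have "w \<notin> nbr_edges d rt par j"
        by (simp add: nbr_edges_def)
      then show ?thesis by simp
    qed
    have "(\<Prod>j\<in>insert w ?D. ?F (\<gamma>(w := a)) j) = ?F (\<gamma>(w := a)) w * (\<Prod>j\<in>?D. ?F (\<gamma>(w := a)) j)"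
      using notin_desc_self[of w] by (intro prod.insert finite_subset[OF desc_subset]) auto
    also have "(\<Prod>j\<in>?D. ?F (\<gamma>(w := a)) j) = (\<Prod>j\<in>?D. ?F \<gamma> j)"
      using below by (rule prod.cong[OF refl])
    also have "\<dots> = (\<Prod>c\<in>ch w. \<Prod>j\<in>sub c. ?F \<gamma> j)"
      by (rule prod_desc_children)
    finally show "(\<Prod>c\<in>ch w. \<Prod>j\<in>sub c. ?F \<gamma> j) * Gs w (x w) ((restrict \<gamma> (ch w))(w := a))
      = (\<Prod>j\<in>insert w ?D. ?F (\<gamma>(w := a)) j)"
      by (simp only: top mult.commute)
  qed
  also have "\<dots> = subtree_contraction Gs x w a"
  proof -
    have "(\<Sum>\<gamma>\<in>PiE ?D ranks. \<Prod>j\<in>insert w ?D. ?F (\<gamma>(w := a)) j)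
        = (\<Sum>b\<in>ranks w. if b = a then \<Sum>\<gamma>\<in>PiE ?D ranks. \<Prod>j\<in>insert w ?D. ?F (\<gamma>(w := b)) j else 0)"
      using a by (simp add: sum.delta)
    also have "\<dots> = (\<Sum>b\<in>ranks w. \<Sum>\<gamma>\<in>PiE ?D ranks.
             if (\<gamma>(w := b)) w = a then \<Prod>j\<in>insert w ?D. ?F (\<gamma>(w := b)) j else 0)"
      by (rule sum.cong[OF refl]) (cases "b = a"; simp)
    also have "\<dots> = subtree_contraction Gs x w a"
      unfolding subtree_contraction_def using notin_desc_self[of w]
      by (simp add: sum_PiE_insert cong: if_cong)
    finally show ?thesis .
  qed
  finally show ?case .
qed

theorem ttns_representation:
  assumes Gs: "\<forall>k\<in>{1..d}. cde d rt par n r p Phi k (Gs k)" and x: "x \<in> X"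
  shows "p x = (\<Sum>\<alpha>\<in>PiE ({1..d} - {rt}) ranks. \<Prod>k=1..d. Gs k (x k) (restrict \<alpha> (nbr_edges d rt par k)))"
proof -
  let ?F = "\<lambda>\<gamma> j. Gs j (x j) (restrict \<gamma> (nbr_edges d rt par j))"
  have Q: "Phi c (restrict x (sub c)) b = subtree_contraction Gs x c b" if "c \<in> ch rt" "b \<in> ranks c" for c b
    using that children_nonroot x by (intro Phi_eq_subtree_contraction[OF Gs]) auto
  have "cde d rt par n r p Phi rt (Gs rt)"
    using Gs root_in by blast
  from bspec[OF this[unfolded cde_root_iff] x]
  have "p x = (\<Sum>\<beta>\<in>PiE (ch rt) ranks. Phi_children d rt par Phi rt x \<beta> * Gs rt (x rt) \<beta>)"
    by simp
  also have "\<dots> = (\<Sum>\<beta>\<in>PiE (ch rt) ranks. (\<Prod>c\<in>ch rt. Phi c (restrict x (sub c)) (\<beta> c)) * Gs rt (x rt) \<beta>)"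
    by (simp add: Phi_children_def)
  also have "\<dots> = (\<Sum>\<gamma>\<in>PiE (desc d rt par rt) ranks.
      (\<Prod>c\<in>ch rt. \<Prod>j\<in>sub c. ?F \<gamma> j) * Gs rt (x rt) (restrict \<gamma> (ch rt)))"
    using Q by (rule sum_over_children_contractions)
  also have "\<dots> = (\<Sum>\<gamma>\<in>PiE ({1..d} - {rt}) ranks. \<Prod>k=1..d. ?F \<gamma> k)"
    unfolding desc_root[symmetric]
  proof (rule sum.cong[OF refl])
    fix \<gamma>
    have "(\<Prod>k=1..d. ?F \<gamma> k) = ?F \<gamma> rt * (\<Prod>k\<in>{1..d} - {rt}. ?F \<gamma> k)"
      by (rule prod.remove[OF finite_atLeastAtMost root_in])
    also have "(\<Prod>k\<in>{1..d} - {rt}. ?F \<gamma> k) = (\<Prod>c\<in>ch rt. \<Prod>j\<in>sub c. ?F \<gamma> j)"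
      unfolding desc_root[symmetric] by (rule prod_desc_children)
    also have "nbr_edges d rt par rt = ch rt"
      by (simp add: nbr_edges_def)
    finally show "(\<Prod>c\<in>ch rt. \<Prod>j\<in>sub c. ?F \<gamma> j) * Gs rt (x rt) (restrict \<gamma> (ch rt)) = (\<Prod>k=1..d. ?F \<gamma> k)"
      by (simp only: mult.commute)
  qed
  finally show ?thesis .
qed

lemma cde_unique_solution:
  assumes k: "k \<in> {1..d}"
  shows "\<exists>G. cde d rt par n r p Phi k G \<and>
           (\<forall>G'. cde d rt par n r p Phi k G' \<longrightarrow> same_core d rt par n r k G G')"
proof (cases "k = rt")
  case True
  then show ?thesis
    using cde_root_solvable cde_root_unique by blast
next
  case False
  with k have "k \<in> {1..d} - {rt}" by simp
  then show ?thesis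
    using cde_nonroot_solvable cde_nonroot_unique by blast
qed

end

theorem theorem1:
  fixes d rt :: nat and par n r :: "nat \<Rightarrow> nat"
    and p :: "(nat \<Rightarrow> nat) \<Rightarrow> real"
    and Phi :: "nat \<Rightarrow> (nat \<Rightarrow> nat) \<Rightarrow> nat \<Rightarrow> real"
    and Psi :: "nat \<Rightarrow> nat \<Rightarrow> (nat \<Rightarrow> nat) \<Rightarrow> real"
  assumes tree: "rooted_tree d rt par"
    and r_pos: "\<forall>w \<in> {1..d} - {rt}. r w > 0"
    and factor: "\<forall>w \<in> {1..d} - {rt}. \<forall>x \<in> idx {1..d} n.
        p x = (\<Sum>a = 1..r w. Phi w (restrict x (desc d rt par w \<union> {w})) a
                              * Psi w a (restrict x (nondesc d rt par w)))"
    and rank: "\<forall>w \<in> {1..d} - {rt}.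
        unfolding_rank n p (desc d rt par w \<union> {w}) (nondesc d rt par w) = r w"
  shows "(\<forall>k \<in> {1..d}. \<exists>G. cde d rt par n r p Phi k G \<and>
            (\<forall>G'. cde d rt par n r p Phi k G' \<longrightarrow> same_core d rt par n r k G G'))
    \<and> (\<forall>Gs. (\<forall>k \<in> {1..d}. cde d rt par n r p Phi k (Gs k)) \<longrightarrow>
         (\<forall>x \<in> idx {1..d} n.
            p x = (\<Sum>\<alpha> \<in> PiE ({1..d} - {rt}) (\<lambda>e. {1..r e}).
                     \<Prod>k = 1..d. Gs k (x k) (restrict \<alpha> (nbr_edges d rt par k)))))"
proof -
  interpret ttns_setting d rt par n r p Phi Psi
    using tree factor rank by (rule ttns_setting.intro)
  show ?thesis
    using cde_unique_solution ttns_representation by blast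
qed

end
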